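(* Let $d\geq1$, $C=\mathbb R_{\geq0}^d$, and order $\mathbb R^d$ componentwise ($x\leq y$ iff $y-x\in C$). For $i=1,\ldots,d$ let $\alpha_i\geq0$, $c_i\geq0$, $\beta^i\in\mathbb R^d$, and $\mu_i$ a Borel measure on $C\setminus\{0\}$ such that $\mu_i(\{\xi\in C:|\xi|>1\})<\infty$, $\int_{\xi\in C,\,0<|\xi|\leq1}\big(\sum_{k\neq i}|\xi_k|+|\xi_i|^2\big)\mu_i(d\xi)<\infty$, and $\beta^i_k-\int_{0<|\xi|\leq1}\xi_k\,\mu_i(d\xi)\geq0$ for all $k\neq i$. Define $f=(f_1,\ldots,f_d)$ with values in $(-\infty,+\infty]$ by $$f_i(x)=\frac{\alpha_i}{2}x_i^2+x\cdot\beta^i-c_i+\int_{C\setminus\{0\}}\left(e^{x\cdot\xi}-1-x\cdot\xi\,\mathbf 1_{|\xi|\leq1}\right)\mu_i(d\xi),\qquad x\in\mathbb R^d,$$ and let $U=\{x\in\mathbb R^d: f_i(x)<\infty\text{ for all }i\}$. Then $U$ is convex and order-regular, and $f$ is convex and quasi-monotone increasing on $U$.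
   Context: A map $g\colon D\to\mathbb R^d$ is convex if $D$ is convex and $g(\lambda x+(1-\lambda)y)\leq\lambda g(x)+(1-\lambda)g(y)$ componentwise for $x,y\in D$, $\lambda\in[0,1]$. For the order induced by $\mathbb R^d_{\geq0}$, $g$ is quasi-monotone increasing on $D$ if for all $x,y\in D$ with $x\leq y$ and $x_i=y_i$ one has $g_i(x)\leq g_i(y)$ (equivalently: $x\leq y$, $l(x)=l(y)$ imply $l(g(x))\leq l(g(y))$ for every linear functional $l$ nonnegative on $\mathbb R^d_{\geq0}$). A set $D$ is order-regular if $x\in D$, $y\leq x$ imply $y\in D$. Here $|\cdot|$ is the Euclidean norm and $x\cdot\xi$ the standard inner product. *)

theory Defs
  imports "HOL-Analysis.Analysis"
begin

definition orthant :: "(real^'n) set" where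
  "orthant = {\<xi>. \<forall>k. 0 \<le> \<xi> $ k}"

text \<open>Extended-real valued integral: integral of the positive part minus
  integral of the negative part (values in (-infinity, +infinity] whenever the
  negative part has finite integral).\<close>
definition ext_integral :: "'a measure \<Rightarrow> ('a \<Rightarrow> real) \<Rightarrow> ereal" where
  "ext_integral M g =
     enn2ereal (\<integral>\<^sup>+ \<xi>. ennreal (g \<xi>) \<partial>M) - enn2ereal (\<integral>\<^sup>+ \<xi>. ennreal (- g \<xi>) \<partial>M)"

definition levy_f ::
  "('n \<Rightarrow> real) \<Rightarrow> ('n \<Rightarrow> real^'n) \<Rightarrow> ('n \<Rightarrow> real) \<Rightarrow> ('n \<Rightarrow> (real^'n) measure)
     \<Rightarrow> 'n \<Rightarrow> real^'n \<Rightarrow> ereal" where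
  "levy_f \<alpha> \<beta> c \<mu> i x =
     ereal (\<alpha> i / 2 * (x $ i)\<^sup>2 + x \<bullet> \<beta> i - c i)
     + ext_integral (restrict_space (\<mu> i) (orthant - {0}))
         (\<lambda>\<xi>. exp (x \<bullet> \<xi>) - 1 - (if norm \<xi> \<le> 1 then x \<bullet> \<xi> else 0))"

end

theory Submission
  imports Defs
begin

(* Everything reduces to pointwise properties of the integrand
   g(x, xi) = exp(x.xi) - 1 - x.xi 1{|xi| <= 1}: it is convex in x, bounded below by
   -1{|xi| > 1}, of order |xi|^2 on the unit ball, and nondecreasing along the order of C
   up to the compensator term. *)

definition levy_integrand :: "'a::real_inner \<Rightarrow> 'a \<Rightarrow> real" where
  "levy_integrand x \<xi> = exp (x \<bullet> \<xi>) - 1 - (if norm \<xi> \<le> 1 then x \<bullet> \<xi> else 0)"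

lemma levy_f_eq:
  "levy_f \<alpha> \<beta> c \<mu> i x = ereal (\<alpha> i / 2 * (x $ i)\<^sup>2 + x \<bullet> \<beta> i - c i)
     + ext_integral (restrict_space (\<mu> i) (orthant - {0})) (levy_integrand x)"
  by (simp add: levy_f_def levy_integrand_def[abs_def])

(* For fixed xi the integrand is a convex function of x: exp of a linear form is convex,
   and the compensator term is linear in x. *)
lemma levy_integrand_convex:
  assumes "0 \<le> t" "t \<le> 1"
  shows "levy_integrand (t *\<^sub>R x + (1 - t) *\<^sub>R y) \<xi> \<le> t * levy_integrand x \<xi> + (1 - t) * levy_integrand y \<xi>"
proof -
  have "exp (t * (x \<bullet> \<xi>) + (1 - t) * (y \<bullet> \<xi>)) \<le> t * exp (x \<bullet> \<xi>) + (1 - t) * exp (y \<bullet> \<xi>)"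
    using convex_onD[OF exp_convex, of t "y \<bullet> \<xi>" "x \<bullet> \<xi>"] assms by (simp add: algebra_simps)
  then show ?thesis
    by (simp add: levy_integrand_def inner_add_left algebra_simps)
qed

(* The integrand is nonnegative on the unit ball and bounded below by -1 outside it; hence its
   negative part is integrable as soon as the mass of the large jumps is finite. *)
lemma levy_integrand_lower: "- indicator {\<xi>. 1 < norm \<xi>} \<xi> \<le> levy_integrand x \<xi>"
proof (cases "norm \<xi> \<le> 1")
  case True
  have "0 \<le> exp (x \<bullet> \<xi>) - 1 - x \<bullet> \<xi>"
    using exp_ge_add_one_self[of "x \<bullet> \<xi>"] by linarith
  with True show ?thesis by (simp add: levy_integrand_def)
next
  case False
  then show ?thesis
    using exp_gt_zero[of "x \<bullet> \<xi>"] by (simp add: levy_integrand_def)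
qed

(* Increment of the integrand in x: if x.xi <= y.xi then the exponential increases, so the
   integrand can decrease at most by the compensator increment (y - x).xi on the unit ball. *)
lemma levy_integrand_increment:
  assumes "x \<bullet> \<xi> \<le> y \<bullet> \<xi>"
  shows "- (if norm \<xi> \<le> 1 then (y - x) \<bullet> \<xi> else 0) \<le> levy_integrand y \<xi> - levy_integrand x \<xi>"
  using assms by (simp add: levy_integrand_def inner_diff_left)

lemma exp_taylor2: "exp (t::real) - 1 - t \<le> exp \<bar>t\<bar> / 2 * t\<^sup>2"
proof -
  obtain s where s: "\<bar>s\<bar> \<le> \<bar>t\<bar>" "exp t = (\<Sum>m<2. t ^ m / fact m) + exp s / fact 2 * t ^ 2"
    using Maclaurin_exp_le[of t 2] by blast
  have "exp s / 2 * t\<^sup>2 \<le> exp \<bar>t\<bar> / 2 * t\<^sup>2"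
    using s(1) by (intro mult_right_mono) auto
  with s(2) show ?thesis by (simp add: numeral_2_eq_2)
qed

lemma levy_integrand_small_bound:
  assumes "norm \<xi> \<le> 1"
  shows "levy_integrand y \<xi> \<le> exp (norm y) / 2 * (norm y)\<^sup>2 * (norm \<xi>)\<^sup>2"
proof -
  let ?t = "y \<bullet> \<xi>"
  have CS: "\<bar>?t\<bar> \<le> norm y * norm \<xi>" by (rule Cauchy_Schwarz_ineq2)
  then have "\<bar>?t\<bar> \<le> norm y"
    using assms by (meson dual_order.trans mult_left_le norm_ge_zero)
  then have exp_le: "exp \<bar>?t\<bar> / 2 \<le> exp (norm y) / 2" by simp
  have sq_le: "?t\<^sup>2 \<le> (norm y)\<^sup>2 * (norm \<xi>)\<^sup>2"
    using CS by (metis abs_ge_zero power2_abs power_mono power_mult_distrib)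
  have "levy_integrand y \<xi> \<le> exp \<bar>?t\<bar> / 2 * ?t\<^sup>2"
    using assms exp_taylor2[of ?t] by (simp add: levy_integrand_def)
  also have "\<dots> \<le> exp (norm y) / 2 * ((norm y)\<^sup>2 * (norm \<xi>)\<^sup>2)"
    using exp_le sq_le by (intro mult_mono) auto
  finally show ?thesis by (simp add: mult.assoc)
qed

lemma orthant_borel: "orthant \<in> sets borel"
  unfolding orthant_def by (simp add: borel_closed closed_Collect_all closed_Collect_le)

lemma inner_le_on_orthant:
  assumes "\<xi> \<in> orthant" "\<forall>k. x $ k \<le> y $ k"
  shows "x \<bullet> \<xi> \<le> y \<bullet> \<xi>"
  using assms unfolding orthant_def inner_vec_def
  by (auto intro!: sum_mono mult_right_mono)

lemma inner_diff_off_coordinate: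
  assumes "x $ i = y $ i"
  shows "(y - x) \<bullet> \<xi> = (\<Sum>k\<in>UNIV - {i}. (y $ k - x $ k) * \<xi> $ k)"
proof -
  have "(y - x) \<bullet> \<xi> = (\<Sum>k\<in>UNIV. (y $ k - x $ k) * \<xi> $ k)"
    by (simp add: inner_vec_def)
  also have "\<dots> = (\<Sum>k\<in>UNIV - {i}. (y $ k - x $ k) * \<xi> $ k)"
    using assms by (simp add: sum.remove[of UNIV i])
  finally show ?thesis .
qed

definition small_jump_weight :: "'n::finite \<Rightarrow> real^'n \<Rightarrow> real" where
  "small_jump_weight i \<xi> = (\<Sum>k\<in>UNIV - {i}. \<bar>\<xi> $ k\<bar>) + (\<xi> $ i)\<^sup>2"

lemma component_le_small_jump_weight:
  assumes "k \<noteq> i"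
  shows "\<bar>\<xi> $ k\<bar> \<le> small_jump_weight i \<xi>"
proof -
  have "\<bar>\<xi> $ k\<bar> \<le> (\<Sum>j\<in>UNIV - {i}. \<bar>\<xi> $ j\<bar>)"
    using assms by (intro member_le_sum) auto
  then show ?thesis
    unfolding small_jump_weight_def using zero_le_power2[of "\<xi> $ i"] by linarith
qed

(* On the unit ball |xi|^2 is controlled by the weight, so the integrand is integrable
   near 0 at every x (by the Taylor bound). *)
lemma norm_sq_le_small_jump_weight:
  assumes "norm \<xi> \<le> 1"
  shows "(norm \<xi>)\<^sup>2 \<le> small_jump_weight i \<xi>"
proof -
  have sq_le_abs: "(\<xi> $ k)\<^sup>2 \<le> \<bar>\<xi> $ k\<bar>" for k
  proof -
    have "\<bar>\<xi> $ k\<bar> \<le> 1" using component_le_norm_cart[of \<xi> k] assms by linarith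
    then have "\<bar>\<xi> $ k\<bar> * \<bar>\<xi> $ k\<bar> \<le> 1 * \<bar>\<xi> $ k\<bar>" by (intro mult_right_mono) auto
    then show ?thesis by (simp add: power2_eq_square abs_mult_self_eq)
  qed
  have "(norm \<xi>)\<^sup>2 = (\<Sum>k\<in>UNIV - {i}. (\<xi> $ k)\<^sup>2) + (\<xi> $ i)\<^sup>2"
    by (simp add: norm_vec_def L2_set_def sum_nonneg sum.remove[of UNIV i] add.commute)
  also have "\<dots> \<le> small_jump_weight i \<xi>"
    unfolding small_jump_weight_def using sq_le_abs by (intro add_right_mono sum_mono) auto
  finally show ?thesis .
qed

definition truncated_coordinate :: "'n::finite \<Rightarrow> real^'n \<Rightarrow> real" where
  "truncated_coordinate k \<xi> = (if norm \<xi> \<le> 1 then \<xi> $ k else 0)"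

locale levy_jump_measure =
  fixes M :: "(real^'n::finite) measure" and i :: 'n
  assumes sets_M: "sets M = sets borel"
    and large_jumps_finite: "emeasure M {\<xi> \<in> orthant. norm \<xi> > 1} < \<infinity>"
    and small_jumps_finite: "(\<integral>\<^sup>+ \<xi> \<in> {\<xi> \<in> orthant. 0 < norm \<xi> \<and> norm \<xi> \<le> 1}.
                ennreal (small_jump_weight i \<xi>) \<partial>M) < \<infinity>"
begin

abbreviation M0 :: "(real^'n) measure" where
  "M0 \<equiv> restrict_space M (orthant - {0})"

lemma space_M0: "space M0 = orthant - {0}"
  by (simp add: space_restrict_space sets_eq_imp_space_eq[OF sets_M])

lemma measurable_M0: "f \<in> borel_measurable borel \<Longrightarrow> f \<in> borel_measurable M0"
  using measurable_cong_sets[OF sets_M refl] by (blast intro: measurable_restrict_space1)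

lemma punctured_orthant_sets: "(orthant - {0}) \<inter> space M \<in> sets M"
proof -
  have "orthant - {0} \<in> sets borel"
    using orthant_borel by (intro sets.Diff) auto
  then show ?thesis by (simp add: sets_M sets_eq_imp_space_eq[OF sets_M])
qed

lemma nn_integral_M0:
  "(\<integral>\<^sup>+\<xi>. f \<xi> \<partial>M0) = (\<integral>\<^sup>+\<xi>. f \<xi> * indicator (orthant - {0}) \<xi> \<partial>M)"
  by (rule nn_integral_restrict_space[OF punctured_orthant_sets])

lemma levy_integrand_measurable: "levy_integrand x \<in> borel_measurable M0"
  by (rule measurable_M0) (unfold levy_integrand_def[abs_def], measurable)

(* The negative part of the integrand is always integrable, so the jump integral is a
   well-defined value in (-infinity, +infinity]. *)
lemma negative_part_finite: "(\<integral>\<^sup>+\<xi>. ennreal (- levy_integrand x \<xi>) \<partial>M0) < \<infinity>"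
proof -
  have large_borel: "{\<xi> \<in> orthant. 1 < norm \<xi>} \<in> sets M"
  proof -
    have "{\<xi> \<in> orthant. 1 < norm \<xi>} = orthant \<inter> {\<xi>. 1 < norm \<xi>}" by auto
    also have "\<dots> \<in> sets borel" using orthant_borel
      by (intro sets.Int) (auto intro!: borel_open open_Collect_less continuous_intros)
    finally show ?thesis using sets_M by simp
  qed
  have "(\<integral>\<^sup>+\<xi>. ennreal (- levy_integrand x \<xi>) \<partial>M0) \<le> (\<integral>\<^sup>+\<xi>. indicator {\<xi>. 1 < norm \<xi>} \<xi> \<partial>M0)"
  proof (rule nn_integral_mono)
    fix \<xi>
    show "ennreal (- levy_integrand x \<xi>) \<le> indicator {\<xi>. 1 < norm \<xi>} \<xi>"
      using levy_integrand_lower[of \<xi> x]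
      by (cases "1 < norm \<xi>") (auto simp: ennreal_neg)
  qed
  also have "\<dots> = (\<integral>\<^sup>+\<xi>. indicator {\<xi> \<in> orthant. 1 < norm \<xi>} \<xi> \<partial>M)"
    unfolding nn_integral_M0 by (intro nn_integral_cong) (auto simp: indicator_def)
  also have "\<dots> = emeasure M {\<xi> \<in> orthant. 1 < norm \<xi>}"
    using large_borel by simp
  finally show ?thesis using large_jumps_finite by simp
qed

lemma integrable_iff_positive_part_finite:
  "integrable M0 (levy_integrand x) \<longleftrightarrow> (\<integral>\<^sup>+\<xi>. ennreal (levy_integrand x \<xi>) \<partial>M0) < \<infinity>"
  using negative_part_finite[of x] levy_integrand_measurable[of x]
  by (simp add: real_integrable_def less_top)

lemma ext_integral_lt_top_iff:
  "ext_integral M0 (levy_integrand x) < \<infinity> \<longleftrightarrow> integrable M0 (levy_integrand x)"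
proof -
  obtain q where q: "0 \<le> q" "(\<integral>\<^sup>+\<xi>. ennreal (- levy_integrand x \<xi>) \<partial>M0) = ennreal q"
    using negative_part_finite[of x] by (auto simp: less_top_ennreal)
  show ?thesis
  proof (cases "(\<integral>\<^sup>+\<xi>. ennreal (levy_integrand x \<xi>) \<partial>M0) = \<infinity>")
    case True
    then show ?thesis using q by (simp add: ext_integral_def integrable_iff_positive_part_finite)
  next
    case False
    then obtain p where "0 \<le> p" "(\<integral>\<^sup>+\<xi>. ennreal (levy_integrand x \<xi>) \<partial>M0) = ennreal p"
      by (auto simp: less_top_ennreal top.not_eq_extremum)
    then show ?thesis using q by (simp add: ext_integral_def integrable_iff_positive_part_finite)
  qed
qed

lemma small_jump_weight_integrable:
  "(\<integral>\<^sup>+\<xi>. ennreal (small_jump_weight i \<xi> * indicator {\<xi>. norm \<xi> \<le> 1} \<xi>) \<partial>M0) < \<infinity>"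
proof -
  have "(\<integral>\<^sup>+\<xi>. ennreal (small_jump_weight i \<xi> * indicator {\<xi>. norm \<xi> \<le> 1} \<xi>) \<partial>M0)
      = (\<integral>\<^sup>+ \<xi> \<in> {\<xi> \<in> orthant. 0 < norm \<xi> \<and> norm \<xi> \<le> 1}. ennreal (small_jump_weight i \<xi>) \<partial>M)"
    unfolding nn_integral_M0 by (intro nn_integral_cong) (auto simp: indicator_def)
  then show ?thesis using small_jumps_finite by simp
qed

(* Convexity of the domain: the positive part of the integrand at a convex combination is
   dominated by the convex combination of the positive parts. *)
lemma integrable_convex_combination:
  assumes ix: "integrable M0 (levy_integrand x)" and iy: "integrable M0 (levy_integrand y)"
    and t: "0 \<le> t" "t \<le> 1"
  shows "integrable M0 (levy_integrand (t *\<^sub>R x + (1 - t) *\<^sub>R y))"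
proof -
  let ?z = "t *\<^sub>R x + (1 - t) *\<^sub>R y"
  have "(\<integral>\<^sup>+\<xi>. ennreal (levy_integrand ?z \<xi>) \<partial>M0) \<le>
     (\<integral>\<^sup>+\<xi>. ennreal t * ennreal (levy_integrand x \<xi>) + ennreal (1 - t) * ennreal (levy_integrand y \<xi>) \<partial>M0)"
  proof (rule nn_integral_mono)
    fix \<xi>
    have ennreal_max0: "ennreal (max a 0) = ennreal a" for a :: real
      by (cases "a \<le> 0") (auto simp: ennreal_neg max_def)
    have "levy_integrand ?z \<xi> \<le> t * max (levy_integrand x \<xi>) 0 + (1 - t) * max (levy_integrand y \<xi>) 0"
      using levy_integrand_convex[OF t, of x y \<xi>] t
        mult_left_mono[OF max.cobounded1, of t "levy_integrand x \<xi>" 0]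
        mult_left_mono[OF max.cobounded1, of "1 - t" "levy_integrand y \<xi>" 0]
      by linarith
    then have "ennreal (levy_integrand ?z \<xi>)
        \<le> ennreal (t * max (levy_integrand x \<xi>) 0 + (1 - t) * max (levy_integrand y \<xi>) 0)"
      by (rule ennreal_leI)
    also have "\<dots> = ennreal t * ennreal (levy_integrand x \<xi>) + ennreal (1 - t) * ennreal (levy_integrand y \<xi>)"
      using t by (simp add: ennreal_plus ennreal_mult ennreal_max0)
    finally show "ennreal (levy_integrand ?z \<xi>)
        \<le> ennreal t * ennreal (levy_integrand x \<xi>) + ennreal (1 - t) * ennreal (levy_integrand y \<xi>)" .
  qed
  also have "\<dots> = ennreal t * (\<integral>\<^sup>+\<xi>. ennreal (levy_integrand x \<xi>) \<partial>M0)
      + ennreal (1 - t) * (\<integral>\<^sup>+\<xi>. ennreal (levy_integrand y \<xi>) \<partial>M0)"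
    using levy_integrand_measurable[of x] levy_integrand_measurable[of y]
    by (simp add: nn_integral_add nn_integral_cmult)
  also have "\<dots> < \<infinity>"
    using ix iy by (simp add: integrable_iff_positive_part_finite ennreal_mult_less_top)
  finally show ?thesis by (simp add: integrable_iff_positive_part_finite)
qed

(* Order-regularity of the domain: for y <= x the integrand at y is dominated by the
   integrand at x on the large jumps (monotonicity on C) and by a multiple of the
   small-jump weight on the unit ball (Taylor bound). *)
lemma integrable_downward:
  assumes ix: "integrable M0 (levy_integrand x)" and le: "\<forall>k. y $ k \<le> x $ k"
  shows "integrable M0 (levy_integrand y)"
proof -
  define K where "K = exp (norm y) / 2 * (norm y)\<^sup>2"
  define w where "w \<xi> = small_jump_weight i \<xi> * indicator {\<xi>. norm \<xi> \<le> 1} \<xi>" for \<xi>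
  have w_measurable: "(\<lambda>\<xi>. ennreal (w \<xi>)) \<in> borel_measurable M0"
  proof (rule measurable_M0)
    have [measurable]: "{\<xi>::real^'n. norm \<xi> \<le> 1} \<in> sets borel"
      by (intro borel_closed closed_Collect_le continuous_intros)
    show "(\<lambda>\<xi>. ennreal (w \<xi>)) \<in> borel_measurable borel"
      unfolding w_def small_jump_weight_def by measurable
  qed
  have "(\<integral>\<^sup>+\<xi>. ennreal (levy_integrand y \<xi>) \<partial>M0)
      \<le> (\<integral>\<^sup>+\<xi>. ennreal (levy_integrand x \<xi>) + ennreal K * ennreal (w \<xi>) \<partial>M0)"
  proof (rule nn_integral_mono)
    fix \<xi> assume "\<xi> \<in> space M0"
    then have \<xi>: "\<xi> \<in> orthant" by (simp add: space_M0)
    show "ennreal (levy_integrand y \<xi>) \<le> ennreal (levy_integrand x \<xi>) + ennreal K * ennreal (w \<xi>)"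
    proof (cases "norm \<xi> \<le> 1")
      case True
      have "levy_integrand y \<xi> \<le> K * (norm \<xi>)\<^sup>2"
        using levy_integrand_small_bound[OF True] by (simp add: K_def)
      also have "\<dots> \<le> K * w \<xi>"
        using norm_sq_le_small_jump_weight[OF True, of i] True
        by (simp add: K_def w_def mult_left_mono)
      finally have "ennreal (levy_integrand y \<xi>) \<le> ennreal (K * w \<xi>)"
        by (rule ennreal_leI)
      also have "\<dots> = ennreal K * ennreal (w \<xi>)"
        by (rule ennreal_mult') (simp add: K_def)
      finally show ?thesis by (simp add: add_increasing)
    next
      case False
      then have "levy_integrand y \<xi> \<le> levy_integrand x \<xi>"
        using levy_integrand_increment[of y \<xi> x] inner_le_on_orthant[OF \<xi> le] by simp
      then show ?thesis by (simp add: ennreal_leI add_increasing2)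
    qed
  qed
  also have "\<dots> = (\<integral>\<^sup>+\<xi>. ennreal (levy_integrand x \<xi>) \<partial>M0) + ennreal K * (\<integral>\<^sup>+\<xi>. ennreal (w \<xi>) \<partial>M0)"
    using levy_integrand_measurable[of x] w_measurable by (simp add: nn_integral_add nn_integral_cmult)
  also have "\<dots> < \<infinity>"
    using ix small_jump_weight_integrable
    by (simp add: integrable_iff_positive_part_finite ennreal_mult_less_top w_def)
  finally show ?thesis by (simp add: integrable_iff_positive_part_finite)
qed

lemma integral_convex:
  assumes ix: "integrable M0 (levy_integrand x)" and iy: "integrable M0 (levy_integrand y)"
    and t: "0 \<le> t" "t \<le> 1"
  shows "integral\<^sup>L M0 (levy_integrand (t *\<^sub>R x + (1 - t) *\<^sub>R y))
    \<le> t * integral\<^sup>L M0 (levy_integrand x) + (1 - t) * integral\<^sup>L M0 (levy_integrand y)"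
proof -
  have "integral\<^sup>L M0 (levy_integrand (t *\<^sub>R x + (1 - t) *\<^sub>R y))
      \<le> integral\<^sup>L M0 (\<lambda>\<xi>. t * levy_integrand x \<xi> + (1 - t) * levy_integrand y \<xi>)"
    using ix iy integrable_convex_combination[OF ix iy t]
    by (intro integral_mono levy_integrand_convex[OF t]) auto
  also have "\<dots> = t * integral\<^sup>L M0 (levy_integrand x) + (1 - t) * integral\<^sup>L M0 (levy_integrand y)"
    using ix iy by simp
  finally show ?thesis .
qed

lemma truncated_coordinate_integrable:
  assumes "k \<noteq> i"
  shows "integrable M0 (truncated_coordinate k)"
proof (rule integrableI_bounded)
  show "truncated_coordinate k \<in> borel_measurable M0"
    by (rule measurable_M0) (unfold truncated_coordinate_def[abs_def], measurable)
  have "(\<integral>\<^sup>+\<xi>. ennreal (norm (truncated_coordinate k \<xi>)) \<partial>M0)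
      \<le> (\<integral>\<^sup>+\<xi>. ennreal (small_jump_weight i \<xi> * indicator {\<xi>. norm \<xi> \<le> 1} \<xi>) \<partial>M0)"
    using component_le_small_jump_weight[OF assms]
    by (intro nn_integral_mono ennreal_leI) (auto simp: truncated_coordinate_def indicator_def)
  also have "\<dots> < \<infinity>" by (rule small_jump_weight_integrable)
  finally show "(\<integral>\<^sup>+\<xi>. ennreal (norm (truncated_coordinate k \<xi>)) \<partial>M0) < \<infinity>" .
qed

lemma truncated_coordinate_integral:
  "integral\<^sup>L M0 (truncated_coordinate k)
    = (LINT \<xi>:{\<xi> \<in> orthant. 0 < norm \<xi> \<and> norm \<xi> \<le> 1}|M. \<xi> $ k)"
  unfolding integral_restrict_space[OF punctured_orthant_sets] set_lebesgue_integral_def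
  by (intro Bochner_Integration.integral_cong) (auto simp: indicator_def truncated_coordinate_def)

(* Quasi-monotonicity of drift plus jump integral: if x <= y and x_i = y_i, then the
   increment of the jump integral is at least -sum_{k ~= i} (y_k - x_k) int xi_k 1{|xi| <= 1},
   which the drift increment sum_{k ~= i} (y_k - x_k) b_k compensates by the drift condition. *)
lemma integral_quasi_mono:
  assumes ix: "integrable M0 (levy_integrand x)" and iy: "integrable M0 (levy_integrand y)"
    and le: "\<forall>k. x $ k \<le> y $ k" and eq: "x $ i = y $ i"
    and drift: "\<And>k. k \<noteq> i \<Longrightarrow> 0 \<le> b $ k - integral\<^sup>L M0 (truncated_coordinate k)"
  shows "x \<bullet> b + integral\<^sup>L M0 (levy_integrand x) \<le> y \<bullet> b + integral\<^sup>L M0 (levy_integrand y)"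
proof -
  let ?K = "UNIV - {i}"
  let ?I = "\<lambda>k. integral\<^sup>L M0 (truncated_coordinate k)"
  let ?lin = "\<lambda>\<xi>. (\<Sum>k\<in>?K. (y $ k - x $ k) * truncated_coordinate k \<xi>)"
  have lin_integrable: "integrable M0 ?lin"
    using truncated_coordinate_integrable
    by (intro Bochner_Integration.integrable_sum integrable_mult_right) auto
  have "- (\<Sum>k\<in>?K. (y $ k - x $ k) * ?I k) = integral\<^sup>L M0 (\<lambda>\<xi>. - ?lin \<xi>)"
    using truncated_coordinate_integrable by (simp add: integral_sum)
  also have "\<dots> \<le> integral\<^sup>L M0 (\<lambda>\<xi>. levy_integrand y \<xi> - levy_integrand x \<xi>)"
  proof (rule integral_mono)
    fix \<xi> assume "\<xi> \<in> space M0"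
    then have "\<xi> \<in> orthant" by (simp add: space_M0)
    then have "x \<bullet> \<xi> \<le> y \<bullet> \<xi>" using le by (rule inner_le_on_orthant)
    moreover have "?lin \<xi> = (if norm \<xi> \<le> 1 then (y - x) \<bullet> \<xi> else 0)"
      using inner_diff_off_coordinate[OF eq, of \<xi>]
      by (simp add: truncated_coordinate_def sum_distrib_left mult.left_commute)
    ultimately show "- ?lin \<xi> \<le> levy_integrand y \<xi> - levy_integrand x \<xi>"
      by (simp only:) (rule levy_integrand_increment)
  qed (use lin_integrable ix iy in auto)
  also have "\<dots> = integral\<^sup>L M0 (levy_integrand y) - integral\<^sup>L M0 (levy_integrand x)"
    using ix iy by simp
  finally have jump_increment:
    "- (\<Sum>k\<in>?K. (y $ k - x $ k) * ?I k) \<le> integral\<^sup>L M0 (levy_integrand y) - integral\<^sup>L M0 (levy_integrand x)" .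
  have drift_increment: "y \<bullet> b - x \<bullet> b = (\<Sum>k\<in>?K. (y $ k - x $ k) * b $ k)"
    using inner_diff_off_coordinate[OF eq, of b] by (simp add: inner_diff_left)
  have "0 \<le> (\<Sum>k\<in>?K. (y $ k - x $ k) * (b $ k - ?I k))"
    using le drift by (intro sum_nonneg mult_nonneg_nonneg) auto
  also have "\<dots> = (\<Sum>k\<in>?K. (y $ k - x $ k) * b $ k) - (\<Sum>k\<in>?K. (y $ k - x $ k) * ?I k)"
    by (simp add: right_diff_distrib sum_subtractf)
  finally show ?thesis using jump_increment drift_increment by linarith
qed

end

lemma ext_integral_integrable:
  assumes "integrable M f"
  shows "ext_integral M f = ereal (integral\<^sup>L M f)"
proof -
  from integrableE[OF assms] obtain r q where
    "0 \<le> r" "0 \<le> q" "(\<integral>\<^sup>+\<xi>. ennreal (f \<xi>) \<partial>M) = ennreal r"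
    "(\<integral>\<^sup>+\<xi>. ennreal (- f \<xi>) \<partial>M) = ennreal q" "integral\<^sup>L M f = r - q"
    by metis
  then show ?thesis by (simp add: ext_integral_def)
qed

lemma levy_f_lt_top_iff:
  assumes "levy_jump_measure (\<mu> i) i"
  shows "levy_f \<alpha> \<beta> c \<mu> i x < \<infinity>
    \<longleftrightarrow> integrable (restrict_space (\<mu> i) (orthant - {0})) (levy_integrand x)"
  using levy_jump_measure.ext_integral_lt_top_iff[OF assms, of x] by (simp add: levy_f_eq)

lemma levy_f_real:
  assumes "integrable (restrict_space (\<mu> i) (orthant - {0})) (levy_integrand x)"
  shows "levy_f \<alpha> \<beta> c \<mu> i x = ereal (\<alpha> i / 2 * (x $ i)\<^sup>2 + x \<bullet> \<beta> i - c i
    + integral\<^sup>L (restrict_space (\<mu> i) (orthant - {0})) (levy_integrand x))"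
  by (simp add: levy_f_eq ext_integral_integrable[OF assms])

(* Convexity of f_i on its domain: the quadratic part is convex since alpha_i >= 0, the
   linear part is affine and the jump part is convex. *)
lemma levy_f_convex:
  assumes J: "levy_jump_measure (\<mu> i) i" and alpha: "0 \<le> \<alpha> i"
    and ix: "integrable (restrict_space (\<mu> i) (orthant - {0})) (levy_integrand x)"
    and iy: "integrable (restrict_space (\<mu> i) (orthant - {0})) (levy_integrand y)"
    and t: "0 \<le> t" "t \<le> 1"
  shows "levy_f \<alpha> \<beta> c \<mu> i (t *\<^sub>R x + (1 - t) *\<^sub>R y)
    \<le> ereal t * levy_f \<alpha> \<beta> c \<mu> i x + ereal (1 - t) * levy_f \<alpha> \<beta> c \<mu> i y"
proof -
  let ?z = "t *\<^sub>R x + (1 - t) *\<^sub>R y"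
  let ?J = "\<lambda>w. integral\<^sup>L (restrict_space (\<mu> i) (orthant - {0})) (levy_integrand w)"
  have iz: "integrable (restrict_space (\<mu> i) (orthant - {0})) (levy_integrand ?z)"
    by (rule levy_jump_measure.integrable_convex_combination[OF J ix iy t])
  have "(?z $ i)\<^sup>2 \<le> t * (x $ i)\<^sup>2 + (1 - t) * (y $ i)\<^sup>2"
    using convex_onD[OF convex_power2, of "1 - t" "x $ i" "y $ i"] t by simp
  then have "\<alpha> i / 2 * (?z $ i)\<^sup>2 \<le> \<alpha> i / 2 * (t * (x $ i)\<^sup>2 + (1 - t) * (y $ i)\<^sup>2)"
    using alpha by (intro mult_left_mono) auto
  also have "\<dots> = t * (\<alpha> i / 2 * (x $ i)\<^sup>2) + (1 - t) * (\<alpha> i / 2 * (y $ i)\<^sup>2)"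
    by (simp add: field_simps)
  finally have quadratic:
    "\<alpha> i / 2 * (?z $ i)\<^sup>2 \<le> t * (\<alpha> i / 2 * (x $ i)\<^sup>2) + (1 - t) * (\<alpha> i / 2 * (y $ i)\<^sup>2)" .
  have linear: "?z \<bullet> \<beta> i - c i = t * (x \<bullet> \<beta> i - c i) + (1 - t) * (y \<bullet> \<beta> i - c i)"
    by (simp add: inner_add_left algebra_simps)
  have jump: "?J ?z \<le> t * ?J x + (1 - t) * ?J y"
    by (rule levy_jump_measure.integral_convex[OF J ix iy t])
  have regroup: "t * (\<alpha> i / 2 * (x $ i)\<^sup>2 + x \<bullet> \<beta> i - c i + ?J x)
        + (1 - t) * (\<alpha> i / 2 * (y $ i)\<^sup>2 + y \<bullet> \<beta> i - c i + ?J y)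
      = (t * (\<alpha> i / 2 * (x $ i)\<^sup>2) + (1 - t) * (\<alpha> i / 2 * (y $ i)\<^sup>2))
        + (t * (x \<bullet> \<beta> i - c i) + (1 - t) * (y \<bullet> \<beta> i - c i))
        + (t * ?J x + (1 - t) * ?J y)"
    by (simp add: algebra_simps)
  have "\<alpha> i / 2 * (?z $ i)\<^sup>2 + ?z \<bullet> \<beta> i - c i + ?J ?z
      \<le> t * (\<alpha> i / 2 * (x $ i)\<^sup>2 + x \<bullet> \<beta> i - c i + ?J x)
        + (1 - t) * (\<alpha> i / 2 * (y $ i)\<^sup>2 + y \<bullet> \<beta> i - c i + ?J y)"
    unfolding regroup using quadratic linear jump by linarith
  then show ?thesis by (simp add: levy_f_real ix iy iz)
qed

(* Quasi-monotonicity of f_i: the quadratic part only depends on x_i, the rest is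
   handled by the quasi-monotonicity of drift plus jump integral. *)
lemma levy_f_quasi_mono:
  assumes J: "levy_jump_measure (\<mu> i) i"
    and ix: "integrable (restrict_space (\<mu> i) (orthant - {0})) (levy_integrand x)"
    and iy: "integrable (restrict_space (\<mu> i) (orthant - {0})) (levy_integrand y)"
    and le: "\<forall>k. x $ k \<le> y $ k" and eq: "x $ i = y $ i"
    and drift: "\<And>k. k \<noteq> i \<Longrightarrow>
      0 \<le> \<beta> i $ k - (LINT \<xi>:{\<xi> \<in> orthant. 0 < norm \<xi> \<and> norm \<xi> \<le> 1}|\<mu> i. \<xi> $ k)"
  shows "levy_f \<alpha> \<beta> c \<mu> i x \<le> levy_f \<alpha> \<beta> c \<mu> i y"
proof -
  have "x \<bullet> \<beta> i + integral\<^sup>L (restrict_space (\<mu> i) (orthant - {0})) (levy_integrand x)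
      \<le> y \<bullet> \<beta> i + integral\<^sup>L (restrict_space (\<mu> i) (orthant - {0})) (levy_integrand y)"
    using drift by (intro levy_jump_measure.integral_quasi_mono[OF J ix iy le eq])
      (simp add: levy_jump_measure.truncated_coordinate_integral[OF J])
  then show ?thesis by (simp add: levy_f_real ix iy eq)
qed

(* The main theorem: U is the set of x at which every integrand is integrable; the four
   claims are the domain and function properties established above. *)
theorem mainTheorem6:
  fixes \<alpha> c :: "'n::finite \<Rightarrow> real"
    and \<beta> :: "'n \<Rightarrow> real^'n"
    and \<mu> :: "'n \<Rightarrow> (real^'n) measure"
  assumes alpha_nonneg: "\<And>i. \<alpha> i \<ge> 0"
    and c_nonneg: "\<And>i. c i \<ge> 0"
    and mu_borel: "\<And>i. sets (\<mu> i) = sets borel"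
    and mu_support: "\<And>i. emeasure (\<mu> i) (UNIV - (orthant - {0})) = 0"
    and mu_large: "\<And>i. emeasure (\<mu> i) {\<xi> \<in> orthant. norm \<xi> > 1} < \<infinity>"
    and mu_small: "\<And>i. (\<integral>\<^sup>+ \<xi> \<in> {\<xi> \<in> orthant. 0 < norm \<xi> \<and> norm \<xi> \<le> 1}.
                ennreal ((\<Sum>k\<in>UNIV - {i}. \<bar>\<xi> $ k\<bar>) + (\<xi> $ i)\<^sup>2) \<partial>\<mu> i) < \<infinity>"
    and drift: "\<And>i k. k \<noteq> i \<Longrightarrow>
                \<beta> i $ k - (LINT \<xi>:{\<xi> \<in> orthant. 0 < norm \<xi> \<and> norm \<xi> \<le> 1}|\<mu> i. \<xi> $ k) \<ge> 0"
  defines "U \<equiv> {x :: real^'n. \<forall>i. levy_f \<alpha> \<beta> c \<mu> i x < \<infinity>}"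
  shows "convex U \<and>
    (\<forall>x\<in>U. \<forall>y. (\<forall>k. y $ k \<le> x $ k) \<longrightarrow> y \<in> U) \<and>
    (\<forall>x\<in>U. \<forall>y\<in>U. \<forall>t::real. 0 \<le> t \<and> t \<le> 1 \<longrightarrow> (\<forall>i.
           levy_f \<alpha> \<beta> c \<mu> i (t *\<^sub>R x + (1 - t) *\<^sub>R y)
             \<le> ereal t * levy_f \<alpha> \<beta> c \<mu> i x + ereal (1 - t) * levy_f \<alpha> \<beta> c \<mu> i y)) \<and>
    (\<forall>x\<in>U. \<forall>y\<in>U. \<forall>i. (\<forall>k. x $ k \<le> y $ k) \<and> x $ i = y $ i \<longrightarrow>
           levy_f \<alpha> \<beta> c \<mu> i x \<le> levy_f \<alpha> \<beta> c \<mu> i y)"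
proof -
  have J: "levy_jump_measure (\<mu> i) i" for i
    using mu_borel mu_large mu_small by (simp add: levy_jump_measure_def small_jump_weight_def)
  have U_iff: "x \<in> U \<longleftrightarrow> (\<forall>i. integrable (restrict_space (\<mu> i) (orthant - {0})) (levy_integrand x))"
    for x unfolding U_def using levy_f_lt_top_iff[where \<mu> = \<mu>, OF J] by blast
  have "convex U"
  proof (rule convexI)
    fix x y and u v :: real
    assume "x \<in> U" "y \<in> U" "0 \<le> u" "0 \<le> v" "u + v = 1"
    moreover from \<open>u + v = 1\<close> have "v = 1 - u" by simp
    ultimately show "u *\<^sub>R x + v *\<^sub>R y \<in> U"
      using levy_jump_measure.integrable_convex_combination[OF J, of _ x y u] by (simp add: U_iff)
  qed
  moreover have "\<forall>x\<in>U. \<forall>y. (\<forall>k. y $ k \<le> x $ k) \<longrightarrow> y \<in> U"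
    using levy_jump_measure.integrable_downward[OF J] unfolding Ball_def U_iff by blast
  moreover have "levy_f \<alpha> \<beta> c \<mu> i (t *\<^sub>R x + (1 - t) *\<^sub>R y)
      \<le> ereal t * levy_f \<alpha> \<beta> c \<mu> i x + ereal (1 - t) * levy_f \<alpha> \<beta> c \<mu> i y"
    if "x \<in> U" "y \<in> U" "0 \<le> t" "t \<le> 1" for x y t i
    using that by (intro levy_f_convex[OF J alpha_nonneg]) (auto simp: U_iff)
  moreover have "levy_f \<alpha> \<beta> c \<mu> i x \<le> levy_f \<alpha> \<beta> c \<mu> i y"
    if "x \<in> U" "y \<in> U" "\<forall>k. x $ k \<le> y $ k" "x $ i = y $ i" for x y i
    using that drift by (intro levy_f_quasi_mono[OF J]) (auto simp: U_iff)
  ultimately show ?thesis by blast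
qed

end
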